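(* Let $X$ be a locally compact (not necessarily abelian) group with neutral element $e$ such that for every open neighbourhood $U_e$ of $e$ there exists $x_*\in U_e$ such that the sequence $(x_*^n)_{n\in\mathbb{N}}$ is not contained in any compact subset of $X$. If a family $\mathcal{F}\subset C_0(X)$ is equicontinuous at every point and equivanishing, then it is pointwise bounded.
   Context: $C_0(X)$ is the space of continuous complex-valued functions on $X$ vanishing at infinity. $\mathcal{F}$ is pointwise bounded if for every $x\in X$ there is $M_x>0$ with $|f(x)|<M_x$ for all $f\in\mathcal{F}$; equicontinuous at every point if for every $x\in X$ and $\varepsilon>0$ there is an open neighbourhood $U$ of $x$ with $|f(y)-f(x)|<\varepsilon$ for all $y\in U$, $f\in\mathcal{F}$; equivanishing if for every $\varepsilon>0$ there is a compact $K\subset X$ with $\sup_{x\in X\setminus K}|f(x)|<\varepsilon$ for all $f\in\mathcal{F}$. *)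

theory Defs
  imports "HOL-Analysis.Analysis"
begin

text \<open>The (not necessarily abelian) group is written additively, as in the class
  topological_group_add: neutral element 0, group operation +. The n-th power of x
  is the n-fold product x + ... + x.\<close>

definition gpow :: "'a::monoid_add \<Rightarrow> nat \<Rightarrow> 'a" where
  "gpow x n = ((\<lambda>y. y + x) ^^ n) 0"

definition C0 :: "('a::topological_space \<Rightarrow> complex) set" where
  "C0 = {f. continuous_on UNIV f \<and>
            (\<forall>\<epsilon>>0. \<exists>K. compact K \<and> (\<forall>x\<in>UNIV - K. norm (f x) < \<epsilon>))}"

definition pointwise_bounded :: "('a \<Rightarrow> complex) set \<Rightarrow> bool" where
  "pointwise_bounded F \<longleftrightarrow> (\<forall>x. \<exists>M>0. \<forall>f\<in>F. norm (f x) < M)"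

definition equicontinuous_everywhere :: "('a::topological_space \<Rightarrow> complex) set \<Rightarrow> bool" where
  "equicontinuous_everywhere F \<longleftrightarrow>
     (\<forall>x. \<forall>\<epsilon>>0. \<exists>U. open U \<and> x \<in> U \<and> (\<forall>y\<in>U. \<forall>f\<in>F. norm (f y - f x) < \<epsilon>))"

definition equivanishing :: "('a::topological_space \<Rightarrow> complex) set \<Rightarrow> bool" where
  "equivanishing F \<longleftrightarrow>
     (\<forall>\<epsilon>>0. \<exists>K. compact K \<and>
        (\<forall>f\<in>F. (SUP x\<in>UNIV - K. ereal (norm (f x))) < ereal \<epsilon>))"

end

theory Submission
  imports Defs
begin

text \<open>Equivanishing gives a compact \<open>K\<close> outside of which all
  \<open>f \<in> F\<close> have modulus below 1, and equicontinuity is uniform on \<open>K\<close>: some neighbourhood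
  \<open>V\<close> of 0 satisfies \<open>|f (c + v) - f c| < 1\<close> for all \<open>c \<in> K\<close>, \<open>v \<in> V\<close>, \<open>f \<in> F\<close>.
  Choose \<open>x \<in> V\<close> whose powers escape every compact set; then the walk
  \<open>x\<^sub>0, x\<^sub>0 + x, x\<^sub>0 + 2x, \<dots>\<close> leaves \<open>K\<close> for the first time after some \<open>N\<close> steps,
  each of which changes every \<open>f \<in> F\<close> by less than 1. Hence \<open>|f x\<^sub>0| < N + 1\<close>.\<close>

lemma gpow_0 [simp]: "gpow x 0 = 0"
  by (simp add: gpow_def)

lemma gpow_Suc: "gpow x (Suc n) = gpow x n + x"
  by (simp add: gpow_def)

lemma norm_le_norm_add_of_steps:
  fixes u :: "nat \<Rightarrow> 'b::real_normed_vector"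
  assumes "\<And>m. m < N \<Longrightarrow> norm (u (Suc m) - u m) \<le> \<epsilon>"
  shows "norm (u 0) \<le> norm (u N) + real N * \<epsilon>"
  using assms
proof (induction N)
  case 0
  then show ?case by simp
next
  case (Suc N)
  have "norm (u N) \<le> norm (u (Suc N)) + norm (u (Suc N) - u N)"
    using norm_triangle_sub[of "u N" "u (Suc N)"] by (simp add: norm_minus_commute)
  also have "\<dots> \<le> norm (u (Suc N)) + \<epsilon>"
    using Suc.prems by simp
  finally show ?case
    using Suc by (simp add: algebra_simps)
qed

lemma zero_nhd_double_sum_in_open:
  fixes y :: "'a::topological_group_add"
  assumes "open U" "y \<in> U"
  obtains W where "open W" "0 \<in> W" "\<And>a b. a \<in> W \<Longrightarrow> b \<in> W \<Longrightarrow> y + a + b \<in> U"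
proof -
  let ?S = "(\<lambda>p::'a \<times> 'a. y + fst p + snd p) -` U"
  have "open ?S"
    by (intro open_vimage assms(1) continuous_intros)
  moreover have "(0, 0) \<in> ?S"
    using assms(2) by simp
  ultimately obtain A B where AB: "open A" "open B" "(0, 0) \<in> A \<times> B" "A \<times> B \<subseteq> ?S"
    by (rule open_prod_elim)
  show ?thesis
  proof (rule that[of "A \<inter> B"])
    show "open (A \<inter> B)" "0 \<in> A \<inter> B"
      using AB(1-3) by auto
    fix a b assume "a \<in> A \<inter> B" "b \<in> A \<inter> B"
    then show "y + a + b \<in> U"
      using AB(4) by auto
  qed
qed

lemma equicontinuous_at_translates:
  fixes F :: "('a::topological_group_add \<Rightarrow> complex) set"
  assumes "equicontinuous_everywhere F"
    and "\<epsilon> > 0"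
  obtains W where "open W" "0 \<in> W"
    "\<And>a b f. a \<in> W \<Longrightarrow> b \<in> W \<Longrightarrow> f \<in> F \<Longrightarrow> norm (f (y + a + b) - f (y + a)) < \<epsilon>"
proof -
  have "\<epsilon> / 2 > 0"
    using assms(2) by simp
  then obtain U where U: "open U" "y \<in> U" "\<forall>z\<in>U. \<forall>f\<in>F. norm (f z - f y) < \<epsilon> / 2"
    using assms(1) unfolding equicontinuous_everywhere_def by meson
  obtain W where W: "open W" "0 \<in> W" "\<And>a b. a \<in> W \<Longrightarrow> b \<in> W \<Longrightarrow> y + a + b \<in> U"
    using zero_nhd_double_sum_in_open[OF U(1,2)] by blast
  show ?thesis
  proof (rule that[OF W(1,2)])
    fix a b f assume a: "a \<in> W" and b: "b \<in> W" and f: "f \<in> F"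
    have "y + a + b \<in> U" "y + a \<in> U"
      using W(3)[OF a b] W(3)[OF a W(2)] by simp_all
    then have "norm (f (y + a + b) - f y) < \<epsilon> / 2" "norm (f (y + a) - f y) < \<epsilon> / 2"
      using U(3) f by blast+
    then show "norm (f (y + a + b) - f (y + a)) < \<epsilon>"
      using norm_diff_triangle_less[of "f (y + a + b)" "f y" "\<epsilon> / 2" "f (y + a)" "\<epsilon> / 2"]
      by (simp add: norm_minus_commute)
  qed
qed

text \<open>Cover \<open>K\<close> by the translates \<open>y + W y\<close> and intersect the finitely many \<open>W y\<close> needed:
  a point \<open>c \<in> y + W y\<close> is \<open>y + a\<close> with \<open>a \<in> W y\<close>, so \<open>c + v = y + a + v\<close>.\<close>

lemma equicontinuous_uniform_on_compact:
  fixes F :: "('a::topological_group_add \<Rightarrow> complex) set"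
  assumes "equicontinuous_everywhere F"
    and "\<epsilon> > 0" and "compact K"
  obtains V where "open V" "0 \<in> V"
    "\<And>c v f. c \<in> K \<Longrightarrow> v \<in> V \<Longrightarrow> f \<in> F \<Longrightarrow> norm (f (c + v) - f c) < \<epsilon>"
proof -
  have "\<exists>W. open W \<and> 0 \<in> W \<and>
      (\<forall>a\<in>W. \<forall>b\<in>W. \<forall>f\<in>F. norm (f (y + a + b) - f (y + a)) < \<epsilon>)" for y
    by (rule equicontinuous_at_translates[OF assms(1,2)]) blast
  then obtain W where W: "\<And>y. open (W y)" "\<And>y. 0 \<in> W y"
    "\<And>y. \<forall>a\<in>W y. \<forall>b\<in>W y. \<forall>f\<in>F. norm (f (y + a + b) - f (y + a)) < \<epsilon>"
    by metis
  let ?O = "\<lambda>y. (\<lambda>c. - y + c) -` W y"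
  have open_O: "open (?O y)" if "y \<in> K" for y
    by (intro open_vimage W(1) continuous_intros)
  have cover: "K \<subseteq> (\<Union>y\<in>K. ?O y)"
  proof
    fix c assume "c \<in> K"
    moreover have "c \<in> ?O c"
      using W(2)[of c] by simp
    ultimately show "c \<in> (\<Union>y\<in>K. ?O y)"
      by (rule UN_I)
  qed
  obtain T where T: "T \<subseteq> K" "finite T" "K \<subseteq> (\<Union>y\<in>T. ?O y)"
    using compactE_image[OF assms(3) open_O cover] by blast
  show ?thesis
  proof (rule that[of "\<Inter>y\<in>T. W y"])
    show "open (\<Inter>y\<in>T. W y)" "0 \<in> (\<Inter>y\<in>T. W y)"
      using T(2) W(1,2) by auto
    fix c v f assume c: "c \<in> K" and v: "v \<in> (\<Inter>y\<in>T. W y)" and f: "f \<in> F"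
    obtain y where y: "y \<in> T" "- y + c \<in> W y"
      using T(3) c by auto
    have "norm (f (y + (- y + c) + v) - f (y + (- y + c))) < \<epsilon>"
      using W(3) y v f by blast
    moreover have "y + (- y + c) = c"
      by (simp add: add.assoc[symmetric])
    ultimately show "norm (f (c + v) - f c) < \<epsilon>"
      by simp
  qed
qed

lemma equivanishing_imp_norm_less:
  assumes "equivanishing F" "\<epsilon> > 0"
  obtains K where "compact K" "\<And>f y. f \<in> F \<Longrightarrow> y \<notin> K \<Longrightarrow> norm (f y) < \<epsilon>"
proof -
  obtain K where K: "compact K" "\<forall>f\<in>F. (SUP x\<in>UNIV - K. ereal (norm (f x))) < ereal \<epsilon>"
    using assms unfolding equivanishing_def by blast
  show ?thesis
  proof (rule that[OF K(1)])
    fix f y assume "f \<in> F" "y \<notin> K"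
    then have "ereal (norm (f y)) \<le> (SUP x\<in>UNIV - K. ereal (norm (f x)))"
      by (intro SUP_upper) simp
    also have "\<dots> < ereal \<epsilon>"
      using K(2) \<open>f \<in> F\<close> by blast
    finally show "norm (f y) < \<epsilon>"
      by simp
  qed
qed

lemma gpow_translate_escapes_compact:
  fixes x :: "'a::topological_group_add"
  assumes "\<not> (\<exists>L. compact L \<and> range (gpow x) \<subseteq> L)" "compact K"
  shows "\<exists>n. x\<^sub>0 + gpow x n \<notin> K"
proof (rule ccontr)
  assume "\<nexists>n. x\<^sub>0 + gpow x n \<notin> K"
  then have "range (gpow x) \<subseteq> (\<lambda>z. - x\<^sub>0 + z) ` K"
    by (auto intro!: image_eqI[where x = "x\<^sub>0 + gpow x _"] simp: add.assoc[symmetric])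
  moreover have "compact ((\<lambda>z. - x\<^sub>0 + z) ` K)"
    by (intro compact_continuous_image assms(2) continuous_intros)
  ultimately show False
    using assms(1) by blast
qed

theorem theorem4p7:
  fixes F :: "('a::{topological_group_add, t2_space} \<Rightarrow> complex) set"
  assumes "locally_compact_space (euclidean :: 'a topology)"
    and "\<forall>U. open U \<and> (0::'a) \<in> U \<longrightarrow>
           (\<exists>x\<in>U. \<not> (\<exists>K. compact K \<and> range (gpow x) \<subseteq> K))"
    and "F \<subseteq> C0"
    and "equicontinuous_everywhere F"
    and "equivanishing F"
  shows "pointwise_bounded F"
  unfolding pointwise_bounded_def
proof
  fix x\<^sub>0 :: 'a
  obtain K where K: "compact K" "\<And>f y. f \<in> F \<Longrightarrow> y \<notin> K \<Longrightarrow> norm (f y) < 1"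
    using equivanishing_imp_norm_less[OF assms(5) zero_less_one] by blast
  obtain V where V: "open V" "0 \<in> V"
    "\<And>c v f. c \<in> K \<Longrightarrow> v \<in> V \<Longrightarrow> f \<in> F \<Longrightarrow> norm (f (c + v) - f c) < 1"
    using equicontinuous_uniform_on_compact[OF assms(4) zero_less_one K(1)] by blast
  obtain x where x: "x \<in> V" "\<not> (\<exists>L. compact L \<and> range (gpow x) \<subseteq> L)"
    using assms(2) V(1,2) by blast
  define N where "N = (LEAST n. x\<^sub>0 + gpow x n \<notin> K)"
  have N: "x\<^sub>0 + gpow x N \<notin> K" "\<And>m. m < N \<Longrightarrow> x\<^sub>0 + gpow x m \<in> K"
    unfolding N_def using LeastI_ex[OF gpow_translate_escapes_compact[OF x(2) K(1)]]
    by (auto dest: not_less_Least)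
  have "norm (f x\<^sub>0) < real N + 1" if f: "f \<in> F" for f
  proof -
    have "norm (f (x\<^sub>0 + gpow x (Suc m)) - f (x\<^sub>0 + gpow x m)) \<le> 1" if "m < N" for m
      using V(3)[OF N(2)[OF that] x(1) f] by (simp add: gpow_Suc add.assoc)
    then have "norm (f x\<^sub>0) \<le> norm (f (x\<^sub>0 + gpow x N)) + real N"
      using norm_le_norm_add_of_steps[of N "\<lambda>m. f (x\<^sub>0 + gpow x m)" 1] by simp
    then show ?thesis
      using K(2)[OF f N(1)] by simp
  qed
  then show "\<exists>M>0. \<forall>f\<in>F. norm (f x\<^sub>0) < M"
    by (intro exI[of _ "real N + 1"]) auto
qed

end
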